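(* Let $\mathcal{H}$ be a hereditary $\sigma$-ring of sets, let $\mu^*$ be an outer measure on $\mathcal{H}$, let $X$ be a set with $X\cap\bigcup\mathcal{H}\neq\emptyset$, and let $\overline{\overline{S}}$ be the class of all $\mu^{**}$-measurable sets. If $A\in\mathcal{H}$ and $\{L_n\}_{n\ge1}$ is a disjoint sequence of sets in $\overline{\overline{S}}$ with $\bigcup_{n=1}^\infty L_n=L$, then $$\sup_{T\in\overline{\overline{S}}}\sum_{n=1}^\infty\mu^*(A\cap L_n\cap T)=\sum_{n=1}^\infty\sup_{T\in\overline{\overline{S}}}\mu^*(A\cap L_n\cap T).$$
   Context: A nonempty class $\mathcal{E}$ of sets is hereditary if $F\in\mathcal{E}$ whenever $E\in\mathcal{E}$ and $F\subseteq E$. A set $E\in\mathcal{H}$ is $\mu^*$-measurable if $\mu^*(A)=\mu^*(A\cap E)+\mu^*(A\cap E')$ for every $A\in\mathcal{H}$, where $E'$ denotes the complement of $E$. Let $\overline{S}$ denote the class of all $\mu^*$-measurable sets. Let $K=\{B\subseteq X: B\cap E\in\mathcal{H}\text{ for all }E\in\mathcal{H}\}$. A set $Q\in K$ is called $\mu^{**}$-measurable if $Q\cap E$ is $\mu^*$-measurable for every $\mu^*$-measurable $E\in\mathcal{H}$, i.e. for all $A\in\mathcal{H}$ and all $E\in\overline{S}$, $\mu^*(A)=\mu^*[A\cap(Q\cap E)]+\mu^*[A\cap(Q\cap E)']$. *)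

theory Defs
  imports "HOL-Analysis.Analysis"
begin

definition hereditary :: "'a set set \<Rightarrow> bool" where
  "hereditary \<E> \<longleftrightarrow> \<E> \<noteq> {} \<and> (\<forall>E\<in>\<E>. \<forall>F. F \<subseteq> E \<longrightarrow> F \<in> \<E>)"

definition sigma_ring_of_sets :: "'a set set \<Rightarrow> bool" where
  "sigma_ring_of_sets \<H> \<longleftrightarrow> \<H> \<noteq> {} \<and>
     (\<forall>E\<in>\<H>. \<forall>F\<in>\<H>. E - F \<in> \<H>) \<and>
     (\<forall>En::nat \<Rightarrow> 'a set. range En \<subseteq> \<H> \<longrightarrow> (\<Union>n. En n) \<in> \<H>)"

definition outer_measure_on :: "'a set set \<Rightarrow> ('a set \<Rightarrow> ennreal) \<Rightarrow> bool" where
  "outer_measure_on \<H> \<mu> \<longleftrightarrow> \<mu> {} = 0 \<and>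
     (\<forall>E\<in>\<H>. \<forall>F\<in>\<H>. E \<subseteq> F \<longrightarrow> \<mu> E \<le> \<mu> F) \<and>
     (\<forall>E (En::nat \<Rightarrow> 'a set). E \<in> \<H> \<longrightarrow> range En \<subseteq> \<H> \<longrightarrow> E \<subseteq> (\<Union>n. En n) \<longrightarrow>
         \<mu> E \<le> (\<Sum>n. \<mu> (En n)))"

(* the class S-bar of mu*-measurable sets (in H); A \<inter> E' written as A - E *)
definition mstar_measurable :: "'a set set \<Rightarrow> ('a set \<Rightarrow> ennreal) \<Rightarrow> 'a set set" where
  "mstar_measurable \<H> \<mu> =
     {E \<in> \<H>. \<forall>A\<in>\<H>. \<mu> A = \<mu> (A \<inter> E) + \<mu> (A - E)}"

definition Kclass :: "'a set set \<Rightarrow> 'a set \<Rightarrow> 'a set set" where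
  "Kclass \<H> X = {B. B \<subseteq> X \<and> (\<forall>E\<in>\<H>. B \<inter> E \<in> \<H>)}"

definition mstarstar_measurable :: "'a set set \<Rightarrow> ('a set \<Rightarrow> ennreal) \<Rightarrow> 'a set \<Rightarrow> 'a set set" where
  "mstarstar_measurable \<H> \<mu> X =
     {Q \<in> Kclass \<H> X. \<forall>A\<in>\<H>. \<forall>E\<in>mstar_measurable \<H> \<mu>.
         \<mu> A = \<mu> (A \<inter> (Q \<inter> E)) + \<mu> (A - (Q \<inter> E))}"

end

theory Submission
  imports Defs
begin

text \<open>Both sides equal \<open>\<Sum>n. \<mu> (A \<inter> L\<^sub>n)\<close>. Each \<open>L\<^sub>n\<close> is itself an admissible \<open>T\<close>, so
  the supremum of \<open>\<mu> (A \<inter> L\<^sub>n \<inter> T)\<close> is attained at \<open>T = L\<^sub>n\<close>. On the left, the finite unions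
  \<open>L\<^sub>0 \<union> \<dots> \<union> L\<^sub>N\<^sub>-\<^sub>1\<close> are \<open>\<mu>\<^sup>*\<^sup>*\<close>-measurable, since \<open>\<mu>\<^sup>*\<close>-measurable sets are closed under finite
  unions, and they recover every partial sum.\<close>

lemma hereditaryD: "hereditary \<H> \<Longrightarrow> E \<in> \<H> \<Longrightarrow> F \<subseteq> E \<Longrightarrow> F \<in> \<H>"
  unfolding hereditary_def by blast

lemma hereditary_empty: "hereditary \<H> \<Longrightarrow> {} \<in> \<H>"
  unfolding hereditary_def by blast

lemma sigma_ring_of_sets_Un:
  assumes "sigma_ring_of_sets \<H>" "E \<in> \<H>" "F \<in> \<H>"
  shows "E \<union> F \<in> \<H>"
proof -
  let ?En = "\<lambda>n::nat. if n = 0 then E else F"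
  have "range ?En = {E, F}"
    by (auto simp: image_iff)
  moreover have "range ?En \<subseteq> \<H>"
    using assms(2,3) by auto
  ultimately have "\<Union>{E, F} \<in> \<H>"
    using assms(1) unfolding sigma_ring_of_sets_def by metis
  then show ?thesis
    by simp
qed

lemma outer_measure_on_mono:
  assumes "hereditary \<H>" "outer_measure_on \<H> \<mu>" "B \<in> \<H>" "C \<subseteq> B"
  shows "\<mu> C \<le> \<mu> B"
  using assms hereditaryD[of \<H> B C] unfolding outer_measure_on_def by blast

lemma mstar_measurableD:
  "E \<in> mstar_measurable \<H> \<mu> \<Longrightarrow> B \<in> \<H> \<Longrightarrow> \<mu> B = \<mu> (B \<inter> E) + \<mu> (B - E)"
  unfolding mstar_measurable_def by blast

lemma mstar_measurable_Un:
  assumes her: "hereditary \<H>" and ring: "sigma_ring_of_sets \<H>"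
    and E: "E \<in> mstar_measurable \<H> \<mu>" and F: "F \<in> mstar_measurable \<H> \<mu>"
  shows "E \<union> F \<in> mstar_measurable \<H> \<mu>"
proof -
  have "E \<in> \<H>" "F \<in> \<H>"
    using E F unfolding mstar_measurable_def by auto
  with ring have "E \<union> F \<in> \<H>"
    by (rule sigma_ring_of_sets_Un)
  moreover have "\<mu> B = \<mu> (B \<inter> (E \<union> F)) + \<mu> (B - (E \<union> F))" if B: "B \<in> \<H>" for B
  proof -
    have "B \<inter> (E \<union> F) \<in> \<H>" "B - E \<in> \<H>"
      using hereditaryD[OF her B] by auto
    have "B - E - F = B - (E \<union> F)" "B \<inter> (E \<union> F) \<inter> E = B \<inter> E"
      "B \<inter> (E \<union> F) - E = (B - E) \<inter> F"
      by blast+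
    have "\<mu> B = \<mu> (B \<inter> E) + \<mu> (B - E)"
      using mstar_measurableD[OF E B] .
    also have "\<mu> (B - E) = \<mu> ((B - E) \<inter> F) + \<mu> (B - (E \<union> F))"
      using mstar_measurableD[OF F \<open>B - E \<in> \<H>\<close>] unfolding \<open>B - E - F = B - (E \<union> F)\<close> .
    also have "\<mu> (B \<inter> E) + \<dots> = (\<mu> (B \<inter> E) + \<mu> ((B - E) \<inter> F)) + \<mu> (B - (E \<union> F))"
      by (simp add: add.assoc)
    also have "\<mu> (B \<inter> E) + \<mu> ((B - E) \<inter> F) = \<mu> (B \<inter> (E \<union> F))"
      using mstar_measurableD[OF E \<open>B \<inter> (E \<union> F) \<in> \<H>\<close>]
      unfolding \<open>B \<inter> (E \<union> F) \<inter> E = B \<inter> E\<close> \<open>B \<inter> (E \<union> F) - E = (B - E) \<inter> F\<close> by simp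
    finally show ?thesis .
  qed
  ultimately show ?thesis
    unfolding mstar_measurable_def by blast
qed

lemma Int_mstar_measurable:
  assumes "Q \<in> mstarstar_measurable \<H> \<mu> X" "E \<in> mstar_measurable \<H> \<mu>"
  shows "Q \<inter> E \<in> mstar_measurable \<H> \<mu>"
  using assms unfolding mstarstar_measurable_def Kclass_def mstar_measurable_def by blast

lemma empty_mstarstar_measurable:
  assumes "hereditary \<H>" "outer_measure_on \<H> \<mu>"
  shows "{} \<in> mstarstar_measurable \<H> \<mu> X"
  using assms hereditary_empty[OF assms(1)]
  unfolding mstarstar_measurable_def Kclass_def outer_measure_on_def by simp

lemma mstarstar_measurable_Un:
  assumes her: "hereditary \<H>" and ring: "sigma_ring_of_sets \<H>"
    and Q1: "Q1 \<in> mstarstar_measurable \<H> \<mu> X" and Q2: "Q2 \<in> mstarstar_measurable \<H> \<mu> X"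
  shows "Q1 \<union> Q2 \<in> mstarstar_measurable \<H> \<mu> X"
proof -
  have "Q1 \<union> Q2 \<in> Kclass \<H> X"
    using Q1 Q2 hereditaryD[OF her] unfolding mstarstar_measurable_def Kclass_def by blast
  moreover have "(Q1 \<union> Q2) \<inter> E \<in> mstar_measurable \<H> \<mu>" if "E \<in> mstar_measurable \<H> \<mu>" for E
    using mstar_measurable_Un[OF her ring
        Int_mstar_measurable[OF Q1 that] Int_mstar_measurable[OF Q2 that]]
    by (simp add: Int_Un_distrib2)
  ultimately show ?thesis
    unfolding mstarstar_measurable_def mstar_measurable_def by blast
qed

lemma mstarstar_measurable_UN:
  assumes "hereditary \<H>" "sigma_ring_of_sets \<H>" "outer_measure_on \<H> \<mu>"
    and "finite I" "Q ` I \<subseteq> mstarstar_measurable \<H> \<mu> X"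
  shows "(\<Union>i\<in>I. Q i) \<in> mstarstar_measurable \<H> \<mu> X"
  using assms(4,5)
  by (induction I rule: finite_induct)
    (simp_all add: empty_mstarstar_measurable[OF assms(1,3)] mstarstar_measurable_Un[OF assms(1,2)])

lemma SUP_Int_mstarstar_measurable:
  assumes "hereditary \<H>" "outer_measure_on \<H> \<mu>"
    and "B \<in> \<H>" "Q \<in> mstarstar_measurable \<H> \<mu> X" "B \<subseteq> Q"
  shows "(SUP T\<in>mstarstar_measurable \<H> \<mu> X. \<mu> (B \<inter> T)) = \<mu> B"
proof (rule antisym)
  show "(SUP T\<in>mstarstar_measurable \<H> \<mu> X. \<mu> (B \<inter> T)) \<le> \<mu> B"
    using outer_measure_on_mono[OF assms(1-3)] by (blast intro: SUP_least)
  show "\<mu> B \<le> (SUP T\<in>mstarstar_measurable \<H> \<mu> X. \<mu> (B \<inter> T))"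
    using assms(4,5) by (auto intro: SUP_upper2 simp: Int_absorb2)
qed

lemma SUP_suminf_eq_suminf:
  fixes f :: "nat \<Rightarrow> 'b \<Rightarrow> ennreal"
  assumes bound: "\<And>n T. T \<in> \<T> \<Longrightarrow> f n T \<le> g n"
    and attained: "\<And>N. \<exists>T\<in>\<T>. \<forall>n<N. f n T = g n"
  shows "(SUP T\<in>\<T>. \<Sum>n. f n T) = (\<Sum>n. g n)"
proof (rule antisym)
  show "(SUP T\<in>\<T>. \<Sum>n. f n T) \<le> (\<Sum>n. g n)"
    using bound by (blast intro: SUP_least suminf_le)
  show "(\<Sum>n. g n) \<le> (SUP T\<in>\<T>. \<Sum>n. f n T)"
    unfolding suminf_eq_SUP[of g]
  proof (rule SUP_least)
    fix N
    obtain T where "T \<in> \<T>" and T: "\<forall>n<N. f n T = g n"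
      using attained by blast
    have "(\<Sum>n<N. g n) = (\<Sum>n<N. f n T)"
      using T by simp
    also have "\<dots> \<le> (\<Sum>n. f n T)"
      by (rule sum_le_suminf) auto
    also have "\<dots> \<le> (SUP T\<in>\<T>. \<Sum>n. f n T)"
      using \<open>T \<in> \<T>\<close> by (rule SUP_upper)
    finally show "(\<Sum>n<N. g n) \<le> (SUP T\<in>\<T>. \<Sum>n. f n T)" .
  qed
qed

theorem lemma3p3:
  fixes \<H> :: "'a set set" and \<mu> :: "'a set \<Rightarrow> ennreal" and X :: "'a set"
    and A L :: "'a set" and Ln :: "nat \<Rightarrow> 'a set"
  assumes "hereditary \<H>" and "sigma_ring_of_sets \<H>"
    and "outer_measure_on \<H> \<mu>"
    and "X \<inter> \<Union>\<H> \<noteq> {}"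
    and "A \<in> \<H>"
    and "range Ln \<subseteq> mstarstar_measurable \<H> \<mu> X"
    and "disjoint_family Ln"
    and "(\<Union>n. Ln n) = L"
  shows "(SUP T\<in>mstarstar_measurable \<H> \<mu> X. (\<Sum>n. \<mu> (A \<inter> Ln n \<inter> T)))
         = (\<Sum>n. (SUP T\<in>mstarstar_measurable \<H> \<mu> X. \<mu> (A \<inter> Ln n \<inter> T)))"
proof -
  have A_Ln: "A \<inter> Ln n \<in> \<H>" for n
    using hereditaryD[OF assms(1,5)] by blast
  have "(SUP T\<in>mstarstar_measurable \<H> \<mu> X. \<mu> (A \<inter> Ln n \<inter> T)) = \<mu> (A \<inter> Ln n)" for n
    using assms(6) by (intro SUP_Int_mstarstar_measurable[OF assms(1,3) A_Ln, of "Ln n"]) auto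
  moreover have "(SUP T\<in>mstarstar_measurable \<H> \<mu> X. (\<Sum>n. \<mu> (A \<inter> Ln n \<inter> T)))
      = (\<Sum>n. \<mu> (A \<inter> Ln n))"
  proof (rule SUP_suminf_eq_suminf)
    show "\<mu> (A \<inter> Ln n \<inter> T) \<le> \<mu> (A \<inter> Ln n)" for n T
      by (rule outer_measure_on_mono[OF assms(1,3) A_Ln]) blast
    show "\<exists>T\<in>mstarstar_measurable \<H> \<mu> X. \<forall>n<N. \<mu> (A \<inter> Ln n \<inter> T) = \<mu> (A \<inter> Ln n)" for N
    proof
      show "(\<Union>i<N. Ln i) \<in> mstarstar_measurable \<H> \<mu> X"
        using assms(6) by (intro mstarstar_measurable_UN[OF assms(1-3)]) auto
      have "A \<inter> Ln n \<inter> (\<Union>i<N. Ln i) = A \<inter> Ln n" if "n < N" for n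
        using that by blast
      then show "\<forall>n<N. \<mu> (A \<inter> Ln n \<inter> (\<Union>i<N. Ln i)) = \<mu> (A \<inter> Ln n)"
        by simp
    qed
  qed
  ultimately show ?thesis
    by simp
qed

end
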